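(* Let $\mathcal{M}=(S,P,E,s_{init},L)$ be a CTMC, $\varepsilon,\delta\geq0$, and $q\geq\max_{s\in S}E(s)$. If $s\sim^{\mathcal{M}}_{\varepsilon,\delta}s'$, then $s\sim_{\tau}s'$ in the uniformization $\mathcal{M}_q$ of $\mathcal{M}$ with respect to $q$, where $\tau=e^{\delta}(1+\varepsilon)-1$.
   Context: A CTMC $(S,P,E,s_{init},L)$: finite $S$, $P\colon S\to\mathrm{Distr}(S)$ ($P(s,A)=\sum_{a\in A}P(s,a)$), $E\colon S\to\mathbb{R}_{>0}$, initial state, labeling $L$. For $R\subseteq S\times S$, $R(A)=\{t\mid\exists a\in A:(a,t)\in R\}$. A reflexive symmetric $R$ is an $(\varepsilon,\delta)$-bisimulation on $\mathcal{M}$ if for all $(s,s')\in R$: $L(s)=L(s')$, $|\ln E(s)-\ln E(s')|\leq\delta$, and $P(s,A)\leq P(s',R(A))+\varepsilon$ for all $A\subseteq S$; $s\sim^{\mathcal{M}}_{\varepsilon,\delta}s'$ if some such relation contains $(s,s')$. The uniformization $\mathcal{M}_q$ is the DTMC $(S,\overline{P},s_{init},L)$ with $\overline{P}(s,s')=P(s,s')E(s)/q$ for $s\neq s'$ and $\overline{P}(s,s)=1+P(s,s)E(s)/q-E(s)/q$. For a DTMC $(S,\overline{P},s_{init},L)$ and $\tau\geq0$, a reflexive symmetric $R\subseteq S\times S$ is a $\tau$-bisimulation if for all $(s,t)\in R$: $L(s)=L(t)$ and $\overline{P}(s,A)\leq\overline{P}(t,R(A))+\tau$ for all $A\subseteq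 S$; $s\sim_\tau t$ if some $\tau$-bisimulation contains $(s,t)$. *)

theory Defs
  imports "HOL-Analysis.Analysis"
begin

definition is_ctmc :: "'a set \<Rightarrow> ('a \<Rightarrow> 'a \<Rightarrow> real) \<Rightarrow> ('a \<Rightarrow> real) \<Rightarrow> 'a \<Rightarrow> ('a \<Rightarrow> 'l) \<Rightarrow> bool" where
  "is_ctmc S P E s0 L \<longleftrightarrow> finite S \<and> s0 \<in> S \<and>
     (\<forall>s\<in>S. (\<forall>t\<in>S. 0 \<le> P s t) \<and> (\<forall>t. t \<notin> S \<longrightarrow> P s t = 0) \<and> sum (P s) S = 1 \<and> 0 < E s)"

definition is_dtmc :: "'a set \<Rightarrow> ('a \<Rightarrow> 'a \<Rightarrow> real) \<Rightarrow> 'a \<Rightarrow> ('a \<Rightarrow> 'l) \<Rightarrow> bool" where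
  "is_dtmc S P s0 L \<longleftrightarrow> finite S \<and> s0 \<in> S \<and>
     (\<forall>s\<in>S. (\<forall>t\<in>S. 0 \<le> P s t) \<and> (\<forall>t. t \<notin> S \<longrightarrow> P s t = 0) \<and> sum (P s) S = 1)"

definition Pset :: "('a \<Rightarrow> 'a \<Rightarrow> real) \<Rightarrow> 'a \<Rightarrow> 'a set \<Rightarrow> real" where
  "Pset P s A = sum (P s) A"

definition rel_img :: "('a \<times> 'a) set \<Rightarrow> 'a set \<Rightarrow> 'a set" where
  "rel_img R A = {t. \<exists>a\<in>A. (a, t) \<in> R}"

definition is_eps_delta_bisim ::
  "'a set \<Rightarrow> ('a \<Rightarrow> 'a \<Rightarrow> real) \<Rightarrow> ('a \<Rightarrow> real) \<Rightarrow> ('a \<Rightarrow> 'l) \<Rightarrow> real \<Rightarrow> real \<Rightarrow> ('a \<times> 'a) set \<Rightarrow> bool" where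
  "is_eps_delta_bisim S P E L \<epsilon> \<delta> R \<longleftrightarrow> R \<subseteq> S \<times> S \<and> refl_on S R \<and> sym R \<and>
     (\<forall>(s, s')\<in>R. L s = L s' \<and> \<bar>ln (E s) - ln (E s')\<bar> \<le> \<delta> \<and>
        (\<forall>A. A \<subseteq> S \<longrightarrow> Pset P s A \<le> Pset P s' (rel_img R A) + \<epsilon>))"

definition ctmc_bisimilar ::
  "'a set \<Rightarrow> ('a \<Rightarrow> 'a \<Rightarrow> real) \<Rightarrow> ('a \<Rightarrow> real) \<Rightarrow> ('a \<Rightarrow> 'l) \<Rightarrow> real \<Rightarrow> real \<Rightarrow> 'a \<Rightarrow> 'a \<Rightarrow> bool" where
  "ctmc_bisimilar S P E L \<epsilon> \<delta> s s' \<longleftrightarrow> (\<exists>R. is_eps_delta_bisim S P E L \<epsilon> \<delta> R \<and> (s, s') \<in> R)"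

definition unif :: "('a \<Rightarrow> 'a \<Rightarrow> real) \<Rightarrow> ('a \<Rightarrow> real) \<Rightarrow> real \<Rightarrow> 'a \<Rightarrow> 'a \<Rightarrow> real" where
  "unif P E q s t = (if s \<noteq> t then P s t * E s / q else 1 + P s s * E s / q - E s / q)"

definition is_tau_bisim ::
  "'a set \<Rightarrow> ('a \<Rightarrow> 'a \<Rightarrow> real) \<Rightarrow> ('a \<Rightarrow> 'l) \<Rightarrow> real \<Rightarrow> ('a \<times> 'a) set \<Rightarrow> bool" where
  "is_tau_bisim S P L \<tau> R \<longleftrightarrow> R \<subseteq> S \<times> S \<and> refl_on S R \<and> sym R \<and>
     (\<forall>(s, t)\<in>R. L s = L t \<and> (\<forall>A. A \<subseteq> S \<longrightarrow> Pset P s A \<le> Pset P t (rel_img R A) + \<tau>))"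

definition dtmc_bisimilar ::
  "'a set \<Rightarrow> ('a \<Rightarrow> 'a \<Rightarrow> real) \<Rightarrow> ('a \<Rightarrow> 'l) \<Rightarrow> real \<Rightarrow> 'a \<Rightarrow> 'a \<Rightarrow> bool" where
  "dtmc_bisimilar S P L \<tau> s t \<longleftrightarrow> (\<exists>R. is_tau_bisim S P L \<tau> R \<and> (s, t) \<in> R)"

end

theory Submission
  imports Defs
begin

text \<open>Write \<open>a = E x / q\<close> and \<open>b = E t / q\<close> for related states \<open>x\<close>, \<open>t\<close>, so that
  \<open>a, b \<in> (0, 1]\<close> and each is at most \<open>exp \<delta>\<close> times the other. The uniformized chain moves
  from \<open>x\<close> into \<open>A\<close> with probability \<open>a P(x,A)\<close>, plus the self-loop mass \<open>1 - a\<close> if \<open>x \<in> A\<close>;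
  in that case \<open>t \<in> R(A)\<close> receives the self-loop mass \<open>1 - b\<close> as well. Comparing the two
  sums, the difference of the jump probabilities costs at most \<open>\<epsilon>\<close> and the difference
  of the rates at most \<open>exp \<delta> - 1\<close>, and \<open>(exp \<delta> - 1) + \<epsilon> \<le> exp \<delta> (1 + \<epsilon>) - 1\<close>. So the
  same relation \<open>R\<close> is a \<open>\<tau>\<close>-bisimulation of the uniformization.\<close>

lemma Pset_unif:
  assumes "finite A"
  shows "Pset (unif P E q) s A = E s / q * Pset P s A + (if s \<in> A then 1 - E s / q else 0)"
proof -
  have "unif P E q s a = E s / q * P s a + (if s = a then 1 - E s / q else 0)" for a
    by (simp add: unif_def)
  then have "Pset (unif P E q) s A
      = E s / q * Pset P s A + (\<Sum>a\<in>A. if s = a then 1 - E s / q else 0)"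
    by (simp add: Pset_def sum.distrib sum_distrib_left)
  then show ?thesis
    using assms by simp
qed

lemma ctmc_Pset_bounds:
  assumes "is_ctmc S P E s0 L" "s \<in> S" "B \<subseteq> S"
  shows "0 \<le> Pset P s B" "Pset P s B \<le> 1"
proof -
  have "finite S" and nonneg: "\<forall>t\<in>S. 0 \<le> P s t" and total: "sum (P s) S = 1"
    using assms(1,2) unfolding is_ctmc_def by auto
  show "0 \<le> Pset P s B"
    unfolding Pset_def using nonneg assms(3) by (intro sum_nonneg) auto
  have "sum (P s) B \<le> sum (P s) S"
    using \<open>finite S\<close> nonneg assms(3) by (intro sum_mono2) auto
  then show "Pset P s B \<le> 1"
    unfolding Pset_def total .
qed

lemma le_exp_mult_if_abs_ln_diff_le:
  fixes x y \<delta> :: real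
  assumes "0 < x" "0 < y" "\<bar>ln x - ln y\<bar> \<le> \<delta>"
  shows "x \<le> exp \<delta> * y"
proof -
  have "x = exp (ln x)"
    using assms(1) by simp
  also have "\<dots> \<le> exp (\<delta> + ln y)"
    using assms(3) by simp
  also have "\<dots> = exp \<delta> * y"
    using assms(2) by (simp add: exp_add)
  finally show ?thesis .
qed

lemma uniformized_mass_le_of_mem:
  fixes a b p r \<epsilon> \<delta> :: real
  assumes "0 \<le> p" "p \<le> 1" "r \<le> 1" "p \<le> r + \<epsilon>" "0 \<le> a" "a \<le> 1" "0 \<le> b" "b \<le> 1"
    and "0 \<le> \<epsilon>" "0 \<le> \<delta>" "b \<le> exp \<delta> * a"
  shows "a * p + (1 - a) \<le> b * r + (1 - b) + (exp \<delta> - 1 + \<epsilon>)"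
proof -
  have "b * (1 - r) \<le> b * (1 - p) + \<epsilon>"
    using assms mult_left_mono[of "1 - r" "1 - p + \<epsilon>" b] mult_left_le_one_le[of \<epsilon> b]
    by (simp add: algebra_simps)
  moreover have "(b - a) * (1 - p) \<le> exp \<delta> - 1"
  proof (cases "a \<le> b")
    case True
    have "(b - a) * (1 - p) \<le> b - a"
      using True assms by (simp add: mult_left_le)
    also have "\<dots> \<le> (exp \<delta> - 1) * a"
      using assms by (simp add: algebra_simps)
    also have "\<dots> \<le> exp \<delta> - 1"
      using assms by (simp add: mult_left_le)
    finally show ?thesis .
  next
    case False
    then have "(b - a) * (1 - p) \<le> 0"
      using assms by (intro mult_nonpos_nonneg) auto
    also have "0 \<le> exp \<delta> - 1"
      using assms by simp
    finally show ?thesis .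
  qed
  ultimately show ?thesis
    by (simp add: algebra_simps)
qed

lemma uniformized_mass_le_of_not_mem:
  fixes a b p r \<epsilon> \<delta> :: real
  assumes "p \<le> r + \<epsilon>" "0 \<le> a" "a \<le> 1" "0 \<le> b" "0 \<le> r" "b * r \<le> 1"
    and "0 \<le> \<epsilon>" "0 \<le> \<delta>" "a \<le> exp \<delta> * b"
  shows "a * p \<le> b * r + (exp \<delta> - 1 + \<epsilon>)"
proof -
  have "a * p \<le> a * r + \<epsilon>"
    using assms mult_left_mono[of p "r + \<epsilon>" a] mult_left_le_one_le[of \<epsilon> a]
    by (simp add: algebra_simps)
  also have "\<dots> \<le> exp \<delta> * (b * r) + \<epsilon>"
    using assms mult_right_mono[of a "exp \<delta> * b" r] by simp
  also have "\<dots> \<le> b * r + (exp \<delta> - 1 + \<epsilon>)"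
    using assms mult_left_mono[of "b * r" 1 "exp \<delta> - 1"] by (simp add: algebra_simps)
  finally show ?thesis .
qed

lemma ctmc_scaled_rate_bounds:
  assumes ctmc: "is_ctmc S P E s0 L" and rates: "\<forall>x\<in>S. E x \<le> q"
    and "x \<in> S" "t \<in> S" "\<bar>ln (E x) - ln (E t)\<bar> \<le> \<delta>"
  shows "0 \<le> E x / q" "E x / q \<le> 1" "E x / q \<le> exp \<delta> * (E t / q)"
proof -
  have "0 < E x" "0 < E t"
    using ctmc \<open>x \<in> S\<close> \<open>t \<in> S\<close> unfolding is_ctmc_def by auto
  moreover have "E x \<le> q"
    using rates \<open>x \<in> S\<close> by blast
  ultimately show "0 \<le> E x / q" "E x / q \<le> 1"
    by auto
  have "E x \<le> exp \<delta> * E t"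
    using le_exp_mult_if_abs_ln_diff_le assms(5) \<open>0 < E x\<close> \<open>0 < E t\<close> by blast
  then show "E x / q \<le> exp \<delta> * (E t / q)"
    using \<open>0 < E x\<close> \<open>E x \<le> q\<close> by (simp add: divide_right_mono)
qed

lemma unif_Pset_transfer:
  assumes ctmc: "is_ctmc S P E s0 L" and "0 \<le> \<epsilon>" "0 \<le> \<delta>" and rates: "\<forall>x\<in>S. E x \<le> q"
    and R: "is_eps_delta_bisim S P E L \<epsilon> \<delta> R" and "(x, t) \<in> R" "A \<subseteq> S"
  shows "Pset (unif P E q) x A \<le> Pset (unif P E q) t (rel_img R A) + (exp \<delta> - 1 + \<epsilon>)"
proof -
  have "R \<subseteq> S \<times> S" and rates_close: "\<bar>ln (E x) - ln (E t)\<bar> \<le> \<delta>"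
    and jumps: "Pset P x A \<le> Pset P t (rel_img R A) + \<epsilon>"
    using R \<open>(x, t) \<in> R\<close> \<open>A \<subseteq> S\<close> unfolding is_eps_delta_bisim_def by auto
  then have "x \<in> S" "t \<in> S" and RA: "rel_img R A \<subseteq> S"
    using \<open>(x, t) \<in> R\<close> unfolding rel_img_def by auto
  have "finite S"
    using ctmc unfolding is_ctmc_def by simp
  then have fin: "finite A" "finite (rel_img R A)"
    using \<open>A \<subseteq> S\<close> RA finite_subset by auto
  have a: "0 \<le> E x / q" "E x / q \<le> 1" "E x / q \<le> exp \<delta> * (E t / q)"
    using ctmc_scaled_rate_bounds[OF ctmc rates \<open>x \<in> S\<close> \<open>t \<in> S\<close> rates_close] by auto
  have b: "0 \<le> E t / q" "E t / q \<le> 1" "E t / q \<le> exp \<delta> * (E x / q)"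
    using ctmc_scaled_rate_bounds[OF ctmc rates \<open>t \<in> S\<close> \<open>x \<in> S\<close>] rates_close
    by (auto simp: abs_minus_commute)
  have p: "0 \<le> Pset P x A" "Pset P x A \<le> 1"
    and r: "0 \<le> Pset P t (rel_img R A)" "Pset P t (rel_img R A) \<le> 1"
    using ctmc_Pset_bounds[OF ctmc] \<open>x \<in> S\<close> \<open>t \<in> S\<close> \<open>A \<subseteq> S\<close> RA by auto
  show ?thesis
  proof (cases "x \<in> A")
    case True
    then have "t \<in> rel_img R A"
      using \<open>(x, t) \<in> R\<close> unfolding rel_img_def by auto
    with True show ?thesis
      unfolding Pset_unif[OF fin(1)] Pset_unif[OF fin(2)]
      using uniformized_mass_le_of_mem[OF p r(2) jumps a(1,2) b(1,2) assms(2,3) b(3)] by simp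
  next
    case False
    have "E t / q * Pset P t (rel_img R A) \<le> 1"
      using b r by (intro mult_le_one)
    then have "E x / q * Pset P x A \<le> E t / q * Pset P t (rel_img R A) + (exp \<delta> - 1 + \<epsilon>)"
      using uniformized_mass_le_of_not_mem[OF jumps a(1,2) b(1) r(1) _ assms(2,3) a(3)] by simp
    with False b show ?thesis
      unfolding Pset_unif[OF fin(1)] Pset_unif[OF fin(2)] by auto
  qed
qed

lemma unif_tau_bisim_if_eps_delta_bisim:
  assumes "is_ctmc S P E s0 L" "0 \<le> \<epsilon>" "0 \<le> \<delta>" "\<forall>x\<in>S. E x \<le> q"
    and R: "is_eps_delta_bisim S P E L \<epsilon> \<delta> R"
  shows "is_tau_bisim S (unif P E q) L (exp \<delta> * (1 + \<epsilon>) - 1) R"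
proof -
  have "exp \<delta> - 1 + \<epsilon> \<le> exp \<delta> * (1 + \<epsilon>) - 1"
    using assms(2,3) mult_right_mono[of 1 "exp \<delta>" \<epsilon>] by (simp add: algebra_simps)
  then have "Pset (unif P E q) x A \<le> Pset (unif P E q) t (rel_img R A) + (exp \<delta> * (1 + \<epsilon>) - 1)"
    if "(x, t) \<in> R" "A \<subseteq> S" for x t A
    using unif_Pset_transfer[OF assms(1-4) R that] by linarith
  with R show ?thesis
    unfolding is_tau_bisim_def is_eps_delta_bisim_def by auto
qed

theorem lemma2:
  fixes S :: "'a set" and P :: "'a \<Rightarrow> 'a \<Rightarrow> real" and E :: "'a \<Rightarrow> real"
    and s0 :: 'a and L :: "'a \<Rightarrow> 'l" and \<epsilon> \<delta> q :: real and s s' :: 'a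
  assumes "is_ctmc S P E s0 L"
    and "0 \<le> \<epsilon>" and "0 \<le> \<delta>"
    and "\<forall>x\<in>S. E x \<le> q"
    and "ctmc_bisimilar S P E L \<epsilon> \<delta> s s'"
  shows "dtmc_bisimilar S (unif P E q) L (exp \<delta> * (1 + \<epsilon>) - 1) s s'"
proof -
  obtain R where "is_eps_delta_bisim S P E L \<epsilon> \<delta> R" "(s, s') \<in> R"
    using assms(5) unfolding ctmc_bisimilar_def by blast
  then show ?thesis
    using unif_tau_bisim_if_eps_delta_bisim[OF assms(1-4)] unfolding dtmc_bisimilar_def by blast
qed

end
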